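(* For every state $p$, the state $p$ itself is a vertex (extreme point) of the convex polytope $p^{TP}=\{Tp : T\in TP(d)\}$.
   Context: Fix $d\ge 2$, $\beta\in(0,\infty)$ and pairwise distinct reals $E_0=0,E_1,\dots,E_{d-1}$. Put $q_{m,n}=e^{-\beta(E_m-E_n)}$, $Z=\sum_j q_{j,0}$, $g_i=q_{i,0}/Z$. A state is a probability vector in $\mathbb{R}^d$. $TP(d)$ is the set of $d\times d$ real matrices with non-negative entries, columns summing to $1$, and $Tg=g$. *)

theory Defs
  imports "HOL-Analysis.Analysis"
begin

text \<open>Energies E indexed by the finite type 'n, with a distinguished ground index i0 (E i0 = 0).\<close>

definition qmn :: "real \<Rightarrow> ('n \<Rightarrow> real) \<Rightarrow> 'n \<Rightarrow> 'n \<Rightarrow> real" where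
  "qmn \<beta> E m n = exp (- \<beta> * (E m - E n))"

definition gibbs :: "real \<Rightarrow> ('n::finite \<Rightarrow> real) \<Rightarrow> 'n \<Rightarrow> real ^ 'n" where
  "gibbs \<beta> E i0 = (\<chi> i. qmn \<beta> E i i0 / (\<Sum>j\<in>UNIV. qmn \<beta> E j i0))"

definition is_state :: "real ^ 'n::finite \<Rightarrow> bool" where
  "is_state p \<longleftrightarrow> (\<forall>i. 0 \<le> p $ i) \<and> (\<Sum>i\<in>UNIV. p $ i) = 1"

definition TP :: "real \<Rightarrow> ('n::finite \<Rightarrow> real) \<Rightarrow> 'n \<Rightarrow> (real ^ 'n ^ 'n) set" where
  "TP \<beta> E i0 = {T. (\<forall>i j. 0 \<le> T $ i $ j) \<and> (\<forall>j. (\<Sum>i\<in>UNIV. T $ i $ j) = 1)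
                    \<and> T *v gibbs \<beta> E i0 = gibbs \<beta> E i0}"

definition TP_orbit :: "real \<Rightarrow> ('n::finite \<Rightarrow> real) \<Rightarrow> 'n \<Rightarrow> real ^ 'n \<Rightarrow> (real ^ 'n) set" where
  "TP_orbit \<beta> E i0 p = {T *v p | T. T \<in> TP \<beta> E i0}"

end

theory Submission
  imports Defs
begin

text \<open>
  The quantity \<open>chi_square g q = \<Sum>\<^sub>i q\<^sub>i\<^sup>2 / g\<^sub>i\<close> (one plus the \<open>\<chi>\<^sup>2\<close>-divergence of \<open>q\<close> from
  the Gibbs state \<open>g\<close>) is strictly convex and, by a weighted Cauchy-Schwarz
  inequality, cannot increase under a stochastic matrix that fixes \<open>g\<close>.
  Hence \<open>p\<close> maximises it on its orbit \<open>p\<^sup>T\<^sup>P\<close>, and a point of a set at which a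
  strictly convex function attains its maximum cannot lie inside a segment
  joining two other points of the set.
\<close>

lemma extreme_point_of_strictly_convex_maximum:
  fixes f :: "'a::real_vector \<Rightarrow> real"
  assumes strict: "\<And>a b u. a \<noteq> b \<Longrightarrow> 0 < u \<Longrightarrow> u < 1 \<Longrightarrow>
                     f ((1 - u) *\<^sub>R a + u *\<^sub>R b) < (1 - u) * f a + u * f b"
    and "p \<in> S" and max: "\<And>q. q \<in> S \<Longrightarrow> f q \<le> f p"
  shows "p extreme_point_of S"
  unfolding extreme_point_of_def
proof (intro conjI \<open>p \<in> S\<close> ballI notI)
  fix a b assume "a \<in> S" "b \<in> S" "p \<in> open_segment a b"
  then obtain u where "a \<noteq> b" "0 < u" "u < 1" "p = (1 - u) *\<^sub>R a + u *\<^sub>R b"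
    by (auto simp: in_segment)
  then have "f p < (1 - u) * f a + u * f b"
    using strict by blast
  also have "\<dots> \<le> (1 - u) * f p + u * f p"
    using max[OF \<open>a \<in> S\<close>] max[OF \<open>b \<in> S\<close>] \<open>0 < u\<close> \<open>u < 1\<close>
    by (intro add_mono mult_left_mono) auto
  finally show False
    by (simp add: algebra_simps)
qed

lemma Cauchy_Schwarz_ineq_sum_weighted:
  fixes w g p :: "'a \<Rightarrow> real"
  assumes w: "\<And>j. j \<in> I \<Longrightarrow> 0 \<le> w j" and g: "\<And>j. j \<in> I \<Longrightarrow> 0 < g j"
  shows "(\<Sum>j\<in>I. w j * p j)\<^sup>2 \<le> (\<Sum>j\<in>I. w j * g j) * (\<Sum>j\<in>I. w j * (p j)\<^sup>2 / g j)"
proof -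
  define a where "a j = sqrt (w j * g j)" for j
  define b where "b j = sqrt (w j / g j) * p j" for j
  have "a j * b j = w j * p j" if "j \<in> I" for j
  proof -
    have "w j * g j * (w j / g j) = (w j)\<^sup>2"
      using g[OF that] by (simp add: power2_eq_square)
    then show ?thesis
      using w[OF that] by (simp add: a_def b_def real_sqrt_mult[symmetric])
  qed
  moreover have "(a j)\<^sup>2 = w j * g j" "(b j)\<^sup>2 = w j * (p j)\<^sup>2 / g j" if "j \<in> I" for j
    using w[OF that] g[OF that] by (simp_all add: a_def b_def power_mult_distrib)
  ultimately show ?thesis
    using Cauchy_Schwarz_ineq_sum[of a b I] by (simp cong: sum.cong)
qed

definition chi_square :: "real ^ 'n \<Rightarrow> real ^ 'n::finite \<Rightarrow> real" where
  "chi_square g q = (\<Sum>i\<in>UNIV. (q $ i)\<^sup>2 / g $ i)"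

lemma chi_square_strictly_convex:
  fixes g a b :: "real ^ 'n::finite"
  assumes g: "\<And>i. 0 < g $ i" and "a \<noteq> b" "0 < u" "u < 1"
  shows "chi_square g ((1 - u) *\<^sub>R a + u *\<^sub>R b) < (1 - u) * chi_square g a + u * chi_square g b"
proof -
  have gap: "(1 - u) * ((a $ i)\<^sup>2 / g $ i) + u * ((b $ i)\<^sup>2 / g $ i)
      - (((1 - u) *\<^sub>R a + u *\<^sub>R b) $ i)\<^sup>2 / g $ i
      = u * (1 - u) * ((a $ i - b $ i)\<^sup>2 / g $ i)" for i
    using g[of i] by (simp add: field_simps power2_eq_square)
  obtain k where "a $ k \<noteq> b $ k"
    using \<open>a \<noteq> b\<close> by (auto simp: vec_eq_iff)
  then have "0 < (\<Sum>i\<in>UNIV. (a $ i - b $ i)\<^sup>2 / g $ i)"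
    using g by (intro sum_pos2[of UNIV k]) (auto simp: less_imp_le)
  then have "0 < u * (1 - u) * (\<Sum>i\<in>UNIV. (a $ i - b $ i)\<^sup>2 / g $ i)"
    using \<open>0 < u\<close> \<open>u < 1\<close> by simp
  also have "\<dots> = (\<Sum>i\<in>UNIV. (1 - u) * ((a $ i)\<^sup>2 / g $ i) + u * ((b $ i)\<^sup>2 / g $ i)
                    - (((1 - u) *\<^sub>R a + u *\<^sub>R b) $ i)\<^sup>2 / g $ i)"
    by (simp only: sum_distrib_left gap)
  also have "\<dots> = (1 - u) * chi_square g a + u * chi_square g b
                    - chi_square g ((1 - u) *\<^sub>R a + u *\<^sub>R b)"
    by (simp add: chi_square_def sum_subtractf sum.distrib sum_distrib_left)
  finally show ?thesis
    by simp
qed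

lemma chi_square_stochastic_le:
  fixes g p :: "real ^ 'n::finite" and T :: "real ^ 'n ^ 'n"
  assumes g: "\<And>i. 0 < g $ i" and T_nonneg: "\<And>i j. 0 \<le> T $ i $ j"
    and T_column: "\<And>j. (\<Sum>i\<in>UNIV. T $ i $ j) = 1" and "T *v g = g"
  shows "chi_square g (T *v p) \<le> chi_square g p"
proof -
  have Tg: "(\<Sum>j\<in>UNIV. T $ i $ j * g $ j) = g $ i" for i
    using arg_cong[OF \<open>T *v g = g\<close>, of "\<lambda>v. v $ i"] by (simp add: matrix_vector_mult_def)
  have row: "((T *v p) $ i)\<^sup>2 / g $ i \<le> (\<Sum>j\<in>UNIV. T $ i $ j * (p $ j)\<^sup>2 / g $ j)" for i
  proof -
    have "((T *v p) $ i)\<^sup>2 \<le> g $ i * (\<Sum>j\<in>UNIV. T $ i $ j * (p $ j)\<^sup>2 / g $ j)"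
      using Cauchy_Schwarz_ineq_sum_weighted[of UNIV "\<lambda>j. T $ i $ j" "\<lambda>j. g $ j" "\<lambda>j. p $ j"]
        T_nonneg g Tg[of i]
      by (simp add: matrix_vector_mult_def)
    then show ?thesis
      using g[of i] by (simp add: divide_simps mult.commute)
  qed
  have "chi_square g (T *v p) \<le> (\<Sum>i\<in>UNIV. \<Sum>j\<in>UNIV. T $ i $ j * (p $ j)\<^sup>2 / g $ j)"
    unfolding chi_square_def by (intro sum_mono row)
  also have "\<dots> = (\<Sum>j\<in>UNIV. (\<Sum>i\<in>UNIV. T $ i $ j) * ((p $ j)\<^sup>2 / g $ j))"
    by (subst sum.swap, subst sum_distrib_right, simp only: times_divide_eq_right)
  also have "\<dots> = chi_square g p"
    by (simp add: T_column chi_square_def)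
  finally show ?thesis .
qed

lemma gibbs_pos: "0 < gibbs \<beta> E i0 $ i"
proof -
  have "0 < (\<Sum>j\<in>UNIV. qmn \<beta> E j i0)"
    by (intro sum_pos) (auto simp: qmn_def)
  then show ?thesis
    by (simp add: gibbs_def qmn_def)
qed

lemma mat_1_in_TP: "mat 1 \<in> TP \<beta> E i0"
  by (simp add: TP_def, simp add: mat_def)

lemma chi_square_TP_orbit_le:
  assumes "q \<in> TP_orbit \<beta> E i0 p"
  shows "chi_square (gibbs \<beta> E i0) q \<le> chi_square (gibbs \<beta> E i0) p"
proof -
  obtain T where "T \<in> TP \<beta> E i0" "q = T *v p"
    using assms unfolding TP_orbit_def by blast
  then show ?thesis
    unfolding TP_def by (auto intro: chi_square_stochastic_le gibbs_pos)
qed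

theorem mainTheorem3:
  fixes \<beta> :: real and E :: "'n::finite \<Rightarrow> real" and i0 :: 'n and p :: "real ^ 'n"
  assumes "CARD('n) \<ge> 2"
    and "0 < \<beta>"
    and "E i0 = 0"
    and "inj E"
    and "is_state p"
  shows "p extreme_point_of (TP_orbit \<beta> E i0 p)"
proof (rule extreme_point_of_strictly_convex_maximum[where f = "chi_square (gibbs \<beta> E i0)"])
  show "p \<in> TP_orbit \<beta> E i0 p"
    using mat_1_in_TP unfolding TP_orbit_def by force
qed (use chi_square_strictly_convex[OF gibbs_pos] chi_square_TP_orbit_le in blast)+

end
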